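(* Let $k\geq 2$ and $\ell\geq 3k+2$ be fixed integers. Let $G\in\mathcal{G}_{k,n,p}$ and let $X=X_0,X_1,\dots$ be a simple random walk on $G$ starting at $w\in V(G)$. Then, for every $x\in V(G)$, \[ \mathbb{P}_w[X_\ell=x]=\frac1n\pm\mathcal{O}\!\left(\frac{\sqrt{\log n}}{\sqrt p\, n^{3/2}}\right). \]
   Context: Let $p=p(n)$ satisfy $\frac{\log n}{n^{(k-1)/k}}\le p\le 1-\Omega(\frac{\log^4 n}{n})$. $\mathcal{G}_{k,n,p}$ denotes the set of graphs $G$ on $n$ vertices satisfying: (i) $G$ is not bipartite; (ii) $\operatorname{diam}(G)\le k$; (iii) every vertex has degree $d(v)=pn\pm\mathcal{O}(\sqrt{pn\log n})$; (iv) $2|E(G)|=pn^2\pm\mathcal{O}(\sqrt{pn^2\log n})$; (v) $|N(v)\cap N(w)|=p^2n\pm\mathcal{O}(\max\{\sqrt{p^2n\log n},\log n\})$ for all $v\ne w$; (vi) the unit eigenvector $\phi$ of the largest adjacency eigenvalue has entries $\phi_i=\frac1{\sqrt n}\pm\mathcal{O}(\frac{\log^{3/2}n}{\sqrt p\,n\log(pn)})$; (vii) $\lambda_1=(1+o(1))pn$; (viii) $\max\{|\lambda_2|,|\lambda_n|\}=\mathcal{O}(\sqrt{pn})$, where $\lambda_1\ge\dots\ge\lambda_n$ are the adjacency eigenvalues. Asymptotic notation is as $n\to\infty$ with constants independent of $n$. $\mathbb{P}_w[\cdot]=\mathbb{P}[\cdot\mid X_0=w]$. *)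

theory Defs
  imports "Jordan_Normal_Form.Char_Poly"
begin

text \<open>Simple graphs on the vertex set {0..<n}, given by a symmetric irreflexive
  adjacency relation E (only its restriction to {0..<n} is relevant).\<close>

definition simple_graph :: "nat \<Rightarrow> (nat \<Rightarrow> nat \<Rightarrow> bool) \<Rightarrow> bool" where
  "simple_graph n E \<longleftrightarrow> (\<forall>u<n. \<forall>v<n. E u v = E v u) \<and> (\<forall>u<n. \<not> E u u)"

definition nbhd :: "nat \<Rightarrow> (nat \<Rightarrow> nat \<Rightarrow> bool) \<Rightarrow> nat \<Rightarrow> nat set" where
  "nbhd n E v = {u \<in> {0..<n}. E v u}"

definition deg :: "nat \<Rightarrow> (nat \<Rightarrow> nat \<Rightarrow> bool) \<Rightarrow> nat \<Rightarrow> nat" where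
  "deg n E v = card (nbhd n E v)"

definition num_edges :: "nat \<Rightarrow> (nat \<Rightarrow> nat \<Rightarrow> bool) \<Rightarrow> nat" where
  "num_edges n E = card {(u, v). u < v \<and> v < n \<and> E u v}"

definition bipartite :: "nat \<Rightarrow> (nat \<Rightarrow> nat \<Rightarrow> bool) \<Rightarrow> bool" where
  "bipartite n E \<longleftrightarrow> (\<exists>S. \<forall>u<n. \<forall>v<n. E u v \<longrightarrow> (u \<in> S \<longleftrightarrow> v \<notin> S))"

definition is_walk :: "nat \<Rightarrow> (nat \<Rightarrow> nat \<Rightarrow> bool) \<Rightarrow> nat list \<Rightarrow> bool" where
  "is_walk n E xs \<longleftrightarrow> xs \<noteq> [] \<and> set xs \<subseteq> {0..<n} \<and>
     (\<forall>i. Suc i < length xs \<longrightarrow> E (xs ! i) (xs ! Suc i))"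

definition diam_le :: "nat \<Rightarrow> (nat \<Rightarrow> nat \<Rightarrow> bool) \<Rightarrow> nat \<Rightarrow> bool" where
  "diam_le n E k \<longleftrightarrow> (\<forall>u<n. \<forall>v<n. \<exists>xs. is_walk n E xs \<and> hd xs = u \<and> last xs = v \<and> length xs \<le> k + 1)"

definition adj_mat :: "nat \<Rightarrow> (nat \<Rightarrow> nat \<Rightarrow> bool) \<Rightarrow> real mat" where
  "adj_mat n E = mat n n (\<lambda>(i, j). if E i j then 1 else 0)"

text \<open>Adjacency eigenvalues with multiplicity, in non-increasing order:
  lambda_1 = eigs ! 0, ..., lambda_n = eigs ! (n-1).\<close>
definition eigs :: "nat \<Rightarrow> (nat \<Rightarrow> nat \<Rightarrow> bool) \<Rightarrow> real list" where
  "eigs n E = rev (sorted_list_of_multiset (proots (char_poly (adj_mat n E))))"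

text \<open>Distribution of the simple random walk: walk_prob n E w t x = P_w[X_t = x].\<close>
fun walk_prob :: "nat \<Rightarrow> (nat \<Rightarrow> nat \<Rightarrow> bool) \<Rightarrow> nat \<Rightarrow> nat \<Rightarrow> nat \<Rightarrow> real" where
  "walk_prob n E w 0 x = (if x = w then 1 else 0)"
| "walk_prob n E w (Suc t) x =
     (\<Sum>y<n. walk_prob n E w t y * (if E y x then 1 / real (deg n E y) else 0))"

text \<open>The class G_{k,n,p}, with explicit constants C3,...,C6,C8 for the O-terms in
  (iii)-(vi),(viii) and an error function eps(n) = o(1) for (vii).\<close>
definition good_graph ::
  "nat \<Rightarrow> nat \<Rightarrow> real \<Rightarrow> real \<Rightarrow> real \<Rightarrow> real \<Rightarrow> real \<Rightarrow> real \<Rightarrow> real \<Rightarrow> (nat \<Rightarrow> nat \<Rightarrow> bool) \<Rightarrow> bool" where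
  "good_graph k n p C3 C4 C5 C6 eps C8 E \<longleftrightarrow>
     simple_graph n E \<and>
     \<not> bipartite n E \<and>
     diam_le n E k \<and>
     (\<forall>v<n. \<bar>real (deg n E v) - p * n\<bar> \<le> C3 * sqrt (p * n * ln n)) \<and>
     \<bar>2 * real (num_edges n E) - p * n^2\<bar> \<le> C4 * sqrt (p * n^2 * ln n) \<and>
     (\<forall>v<n. \<forall>w<n. v \<noteq> w \<longrightarrow>
        \<bar>real (card (nbhd n E v \<inter> nbhd n E w)) - p^2 * n\<bar>
          \<le> C5 * max (sqrt (p^2 * n * ln n)) (ln n)) \<and>
     (\<exists>\<phi> \<in> carrier_vec n. adj_mat n E *\<^sub>v \<phi> = eigs n E ! 0 \<cdot>\<^sub>v \<phi> \<and>
        (\<Sum>i<n. (\<phi> $ i)^2) = 1 \<and>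
        (\<forall>i<n. \<bar>\<phi> $ i - 1 / sqrt n\<bar> \<le> C6 * ln n powr (3/2) / (sqrt p * n * ln (p * n)))) \<and>
     \<bar>eigs n E ! 0 - p * n\<bar> \<le> eps * (p * n) \<and>
     max \<bar>eigs n E ! 1\<bar> \<bar>eigs n E ! (n - 1)\<bar> \<le> C8 * sqrt (p * n)"

end

theory Submission
  imports Defs "Jordan_Normal_Form.Schur_Decomposition"
begin

text \<open>
  Write A for the adjacency matrix, \<phi> for the unit eigenvector of the top eigenvalue
  \<lambda>1 and M = max |\<lambda>2| |\<lambda>n|. All degrees are pn(1 \<plusminus> t) with t = O(sqrt(log n / pn)),
  so P_w[X_l = x] lies between (A^l)_wx / (pn(1 + t))^l and (A^l)_wx / (pn(1 - t))^l.
  Spectrally (A^l)_wx = \<lambda>1^l \<phi>_w \<phi>_x \<plusminus> M^l, where \<phi>_i = (1 \<plusminus> t) / sqrt n, and the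
  eigenvalue equation at a single vertex gives \<lambda>1 = pn(1 \<plusminus> O(t)). Hence
  n P_w[X_l = x] = 1 \<plusminus> O(t) \<plusminus> n M^l / (pn/2)^l, and the last term is O(t) because
  M = O(sqrt(pn)), n \<le> (pn)^k and l \<ge> 2k + 1.

  The spectral estimate avoids the spectral theorem. A Schur decomposition gives
  tr(A^2N) = \<Sum>i \<lambda>i^2N \<le> \<lambda>1^2N + n M^2N, which bounds the squared entries of A^N and
  hence |A^N y|^2 for unit vectors y orthogonal to \<phi>; letting N run through the powers
  of two forces |A y| \<le> M |y| on the orthogonal complement of \<phi>.
\<close>

section \<open>Traces of powers and eigenvalues\<close>

definition trace_mat :: "'a::comm_ring_1 mat \<Rightarrow> 'a" where
  "trace_mat A = (\<Sum>i<dim_row A. A $$ (i, i))"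

lemma trace_mat_mult_comm:
  fixes A B :: "'a::comm_ring_1 mat"
  assumes "A \<in> carrier_mat n m" and "B \<in> carrier_mat m n"
  shows "trace_mat (A * B) = trace_mat (B * A)"
proof -
  have "trace_mat (A * B) = (\<Sum>i<n. \<Sum>j<m. A $$ (i, j) * B $$ (j, i))"
    using assms by (simp add: trace_mat_def scalar_prod_def atLeast0LessThan)
  also have "\<dots> = (\<Sum>j<m. \<Sum>i<n. B $$ (j, i) * A $$ (i, j))"
    by (subst sum.swap) (simp add: mult.commute)
  also have "\<dots> = trace_mat (B * A)"
    using assms by (simp add: trace_mat_def scalar_prod_def atLeast0LessThan)
  finally show ?thesis .
qed

lemma trace_mat_similar:
  assumes "similar_mat A B"
  shows "trace_mat A = trace_mat B"
proof -
  obtain n P Q where carr: "{A, B, P, Q} \<subseteq> carrier_mat n n"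
    and QP: "Q * P = 1\<^sub>m n" and A: "A = P * B * Q"
    using similar_matD[OF assms] by blast
  have "trace_mat A = trace_mat (Q * (P * B))"
    unfolding A using carr by (intro trace_mat_mult_comm[of _ n n]) auto
  also have "Q * (P * B) = (Q * P) * B"
    using carr by (simp add: assoc_mult_mat[of Q n n P n B n])
  also have "\<dots> = B"
    using carr left_mult_one_mat[of B n n] by (simp add: QP)
  finally show ?thesis .
qed

lemma similar_mat_pow: "similar_mat A B \<Longrightarrow> similar_mat (A ^\<^sub>m k) (B ^\<^sub>m k)"
  unfolding similar_mat_def using similar_mat_wit_pow by blast

lemma upper_triangular_mult:
  fixes A B :: "'a::comm_ring_1 mat"
  assumes A: "A \<in> carrier_mat n n" "upper_triangular A"
    and B: "B \<in> carrier_mat n n" "upper_triangular B"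
  shows "upper_triangular (A * B)"
    and "i < n \<Longrightarrow> (A * B) $$ (i, i) = A $$ (i, i) * B $$ (i, i)"
proof -
  have entry: "(A * B) $$ (i, j) = (\<Sum>k<n. A $$ (i, k) * B $$ (k, j))" if "i < n" "j < n" for i j
    using that A B by (simp add: scalar_prod_def atLeast0LessThan)
  have vanish: "A $$ (i, k) * B $$ (k, j) = 0" if "i < n" "k < n" "\<not> (i \<le> k \<and> k \<le> j)" for i j k
    using that A B by (auto simp: upper_triangular_def not_le)
  show "upper_triangular (A * B)"
  proof (rule upper_triangularI)
    fix i j assume ij: "i < dim_row (A * B)" "j < i"
    then have "(A * B) $$ (i, j) = (\<Sum>k<n. A $$ (i, k) * B $$ (k, j))"
      using A by (intro entry) auto
    also have "\<dots> = 0"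
      using ij A by (intro sum.neutral) (auto intro: vanish)
    finally show "(A * B) $$ (i, j) = 0" .
  qed
  assume i: "i < n"
  have "(\<Sum>k<n. A $$ (i, k) * B $$ (k, i)) = A $$ (i, i) * B $$ (i, i)"
    using i by (subst sum.remove[of _ i]) (auto intro!: sum.neutral vanish)
  with entry[OF i i] show "(A * B) $$ (i, i) = A $$ (i, i) * B $$ (i, i)" by simp
qed

lemma upper_triangular_pow:
  fixes A :: "'a::comm_ring_1 mat"
  assumes A: "A \<in> carrier_mat n n" and ut: "upper_triangular A"
  shows "upper_triangular (A ^\<^sub>m k) \<and> (\<forall>i<n. (A ^\<^sub>m k) $$ (i, i) = A $$ (i, i) ^ k)"
proof (induction k)
  case 0
  show ?case using A by auto
next
  case (Suc k)
  with upper_triangular_mult[of "A ^\<^sub>m k" n A] A ut show ?case by simp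
qed

lemma proots_prod_linear: "proots (\<Prod>a\<leftarrow>as. [:- a, 1:]) = mset as"
proof (induction as)
  case (Cons a as)
  have "(\<Prod>a\<leftarrow>as. [:- a, 1:]) \<noteq> 0" by (auto simp: prod_list_zero_iff)
  then show ?case
    using Cons.IH proots_mult[of "[:- a, 1:]"] proots_linear_factor[of "- a"] by simp
qed simp

lemma trace_pow_eq_power_sum_roots:
  fixes A :: "'a::conjugatable_ordered_field mat"
  assumes A: "A \<in> carrier_mat n n" and split: "char_poly A = (\<Prod>a\<leftarrow>as. [:- a, 1:])"
  shows "trace_mat (A ^\<^sub>m k) = (\<Sum>a\<in>#proots (char_poly A). a ^ k)"
proof -
  obtain B where B: "B \<in> carrier_mat n n" "upper_triangular B" and sim: "similar_mat A B"
    using schur_decomposition_exists[OF A split] by blast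
  have "proots (char_poly A) = mset (diag_mat B)"
    using char_poly_similar[OF sim] char_poly_upper_triangular[OF B] proots_prod_linear by metis
  then have "(\<Sum>a\<in>#proots (char_poly A). a ^ k) = (\<Sum>i<n. B $$ (i, i) ^ k)"
    using B by (simp add: diag_mat_def atLeast0LessThan sum_unfold_sum_mset image_mset.compositionality o_def)
  also have "\<dots> = trace_mat (B ^\<^sub>m k)"
    using B upper_triangular_pow[OF B] by (simp add: trace_mat_def)
  also have "\<dots> = trace_mat (A ^\<^sub>m k)"
    using similar_mat_pow[OF sim] trace_mat_similar by metis
  finally show ?thesis ..
qed

lemma symmetric_mat_entry:
  assumes "A \<in> carrier_mat n n" "transpose_mat A = A" "i < n" "j < n"
  shows "A $$ (j, i) = A $$ (i, j)"
proof -
  have "transpose_mat A $$ (i, j) = A $$ (j, i)" using assms(1,3,4) by simp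
  then show ?thesis using assms(2) by simp
qed

lemma real_symmetric_eigenvalue_real:
  fixes A :: "real mat"
  assumes A: "A \<in> carrier_mat n n" and sym: "transpose_mat A = A"
    and ev: "eigenvector (map_mat complex_of_real A) z a"
  shows "Im a = 0"
proof -
  let ?Ac = "map_mat complex_of_real A"
  have z: "z \<in> carrier_vec n" "z \<noteq> 0\<^sub>v n" and Az: "?Ac *\<^sub>v z = a \<cdot>\<^sub>v z"
    using ev A unfolding eigenvector_def by auto
  have Ac: "?Ac \<in> carrier_mat n n" "transpose_mat ?Ac = ?Ac"
    using A symmetric_mat_entry[OF A sym] by (auto intro!: eq_matI)
  have conj_Ac: "conjugate (?Ac *\<^sub>v z) = ?Ac *\<^sub>v conjugate z"
    using A z by (intro eq_vecI) (simp_all add: scalar_prod_def)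
  have "a * (z \<bullet>c z) = (?Ac *\<^sub>v z) \<bullet>c z"
    using z by (simp add: Az)
  also have "\<dots> = z \<bullet> (?Ac *\<^sub>v conjugate z)"
    using transpose_vec_mult_scalar[of ?Ac n n "conjugate z" z] Ac z by simp
  also have "\<dots> = cnj a * (z \<bullet>c z)"
    using z by (simp flip: conj_Ac add: Az conjugate_smult_vec)
  finally have "a = cnj a"
    using z by simp
  then show ?thesis
    by (metis Reals_cnj_iff complex_is_Real_iff)
qed

lemma real_symmetric_char_poly_splits:
  fixes A :: "real mat"
  assumes A: "A \<in> carrier_mat n n" and sym: "transpose_mat A = A"
  shows "\<exists>rs. char_poly A = (\<Prod>r\<leftarrow>rs. [:- r, 1:])"
proof -
  let ?Ac = "map_mat complex_of_real A"
  obtain as where cp: "char_poly ?Ac = (\<Prod>a\<leftarrow>as. [:- a, 1:])"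
    using char_poly_factorized[of ?Ac n] A by auto
  have "Im a = 0" if "a \<in> set as" for a
  proof -
    have "poly (char_poly ?Ac) a = 0"
      unfolding cp using that by (rule linear_poly_root)
    then obtain z where "eigenvector ?Ac z a"
      using eigenvalue_root_char_poly[of ?Ac n] A unfolding eigenvalue_def by auto
    then show ?thesis by (rule real_symmetric_eigenvalue_real[OF A sym])
  qed
  then have as: "as = map complex_of_real (map Re as)"
    by (induction as) (auto simp: complex_eq_iff)
  interpret of_real_poly: map_poly_inj_comm_ring_hom complex_of_real ..
  have "map_poly complex_of_real (char_poly A) = char_poly ?Ac"
    by (rule of_real_hom.char_poly_hom[OF A, symmetric])
  also have "\<dots> = map_poly complex_of_real (\<Prod>r\<leftarrow>map Re as. [:- r, 1:])"
    by (subst cp, subst as) (simp add: of_real_poly.hom_prod_list o_def)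
  finally show ?thesis
    by (intro exI[of _ "map Re as"]) simp
qed

lemma trace_pow_real_symmetric:
  fixes A :: "real mat"
  assumes "A \<in> carrier_mat n n" and "transpose_mat A = A"
  shows "trace_mat (A ^\<^sub>m k) = (\<Sum>a\<in>#proots (char_poly A). a ^ k)"
  using trace_pow_eq_power_sum_roots real_symmetric_char_poly_splits assms by metis

lemma size_proots_real_symmetric:
  fixes A :: "real mat"
  assumes A: "A \<in> carrier_mat n n" and "transpose_mat A = A"
  shows "size (proots (char_poly A)) = n"
proof -
  obtain rs where cp: "char_poly A = (\<Prod>r\<leftarrow>rs. [:- r, 1:])"
    using real_symmetric_char_poly_splits assms by blast
  have "n = degree (char_poly A)"
    using degree_monic_char_poly[OF A] by simp
  also have "\<dots> = length rs"
    unfolding cp using degree_linear_factors[of uminus rs] by simp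
  finally show ?thesis
    by (simp add: cp proots_prod_linear)
qed

lemma scalar_prod_self_nonneg: "0 \<le> (v :: real vec) \<bullet> v"
  by (simp add: scalar_prod_def sum_nonneg)

lemma scalar_prod_self_eq_0_iff:
  fixes v :: "real vec"
  assumes "v \<in> carrier_vec n"
  shows "v \<bullet> v = 0 \<longleftrightarrow> v = 0\<^sub>v n"
  using conjugate_square_eq_0_vec[OF assms] by simp

lemma scalar_prod_diff_smult_self:
  fixes u v :: "real vec"
  assumes "u \<in> carrier_vec n" and "v \<in> carrier_vec n"
  shows "(u - c \<cdot>\<^sub>v v) \<bullet> (u - c \<cdot>\<^sub>v v) = u \<bullet> u - 2 * c * (u \<bullet> v) + c\<^sup>2 * (v \<bullet> v)"
  using assms
  by (simp add: minus_scalar_prod_distrib[of _ n] scalar_prod_minus_distrib[of _ n]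
      comm_scalar_prod[of v n u] power2_eq_square algebra_simps)

lemma cauchy_schwarz_scalar_prod:
  fixes u v :: "real vec"
  assumes u: "u \<in> carrier_vec n" and v: "v \<in> carrier_vec n"
  shows "(u \<bullet> v)\<^sup>2 \<le> (u \<bullet> u) * (v \<bullet> v)"
proof (cases "v = 0\<^sub>v n")
  case True
  then show ?thesis using u by simp
next
  case False
  then have pos: "0 < v \<bullet> v"
    using scalar_prod_self_nonneg[of v] scalar_prod_self_eq_0_iff[OF v] by linarith
  have "0 \<le> (u - (u \<bullet> v / (v \<bullet> v)) \<cdot>\<^sub>v v) \<bullet> (u - (u \<bullet> v / (v \<bullet> v)) \<cdot>\<^sub>v v)"
    by (rule scalar_prod_self_nonneg)
  also have "\<dots> = u \<bullet> u - (u \<bullet> v)\<^sup>2 / (v \<bullet> v)"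
    using pos by (simp add: scalar_prod_diff_smult_self[OF u v] power2_eq_square field_simps)
  finally show ?thesis
    using pos by (simp add: field_simps)
qed

lemma bessel_orthonormal_pair:
  fixes r e f :: "real vec"
  assumes r: "r \<in> carrier_vec n" and e: "e \<in> carrier_vec n" and f: "f \<in> carrier_vec n"
    and "e \<bullet> e = 1" and "f \<bullet> f = 1" and "e \<bullet> f = 0"
  shows "(r \<bullet> e)\<^sup>2 + (r \<bullet> f)\<^sup>2 \<le> r \<bullet> r"
proof -
  let ?p = "r - (r \<bullet> e) \<cdot>\<^sub>v e"
  have "r \<bullet> f = ?p \<bullet> f"
    using assms by (simp add: minus_scalar_prod_distrib[of _ n] comm_scalar_prod[of e n f])
  then have "(r \<bullet> f)\<^sup>2 \<le> ?p \<bullet> ?p"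
    using cauchy_schwarz_scalar_prod[of ?p n f] assms by simp
  also have "\<dots> = r \<bullet> r - (r \<bullet> e)\<^sup>2"
    using assms by (simp add: scalar_prod_diff_smult_self[OF r e] power2_eq_square)
  finally show ?thesis by simp
qed

section \<open>Symmetric matrices with a spectral gap\<close>

lemma pow_mat_add:
  assumes A: "A \<in> carrier_mat n n"
  shows "A ^\<^sub>m (i + j) = A ^\<^sub>m i * A ^\<^sub>m j"
proof (induction j)
  case 0
  show ?case using A by simp
next
  case (Suc j)
  then show ?case
    using A by (simp add: assoc_mult_mat[of _ n n _ n _ n])
qed

lemma transpose_pow_mat_symmetric:
  fixes A :: "'a::comm_semiring_1 mat"
  assumes A: "A \<in> carrier_mat n n" and sym: "transpose_mat A = A"
  shows "transpose_mat (A ^\<^sub>m k) = A ^\<^sub>m k"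
proof (induction k)
  case 0
  show ?case using A by simp
next
  case (Suc k)
  have "transpose_mat (A ^\<^sub>m Suc k) = A * A ^\<^sub>m k"
    using A by (simp add: transpose_mult[of _ n n] Suc.IH sym)
  also have "\<dots> = A ^\<^sub>m k * A"
    using pow_mat_add[OF A, of 1 k] A by simp
  finally show ?case by simp
qed

lemma pow_mult_mat_vec_carrier[simp]:
  "A \<in> carrier_mat n n \<Longrightarrow> v \<in> carrier_vec n \<Longrightarrow> A ^\<^sub>m k *\<^sub>v v \<in> carrier_vec n"
  by (metis mult_mat_vec_carrier pow_carrier_mat)

lemma symmetric_mat_vec_adjoint:
  fixes A :: "'a::comm_semiring_0 mat"
  assumes A: "A \<in> carrier_mat n n" and "transpose_mat A = A"
    and "u \<in> carrier_vec n" and "v \<in> carrier_vec n"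
  shows "(A *\<^sub>v u) \<bullet> v = u \<bullet> (A *\<^sub>v v)"
  using transpose_vec_mult_scalar[of A n n v u] assms by simp

lemma trace_square_symmetric:
  fixes B :: "'a::comm_ring_1 mat"
  assumes B: "B \<in> carrier_mat n n" and sym: "transpose_mat B = B"
  shows "trace_mat (B * B) = (\<Sum>i<n. row B i \<bullet> row B i)"
  unfolding trace_mat_def using B sym
  by (intro sum.cong) (auto simp flip: row_transpose)

lemma scalar_prod_self_eq_sum_sq:
  fixes v :: "real vec"
  assumes "v \<in> carrier_vec n"
  shows "v \<bullet> v = (\<Sum>i<n. (v $ i)\<^sup>2)"
  using assms by (simp add: scalar_prod_def atLeast0LessThan power2_eq_square)

lemma vec_index_sq_le_scalar_prod_self:
  fixes v :: "real vec"
  assumes "v \<in> carrier_vec n" and "i < n"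
  shows "(v $ i)\<^sup>2 \<le> v \<bullet> v"
  unfolding scalar_prod_self_eq_sum_sq[OF assms(1)]
  using assms(2) by (intro member_le_sum) auto

lemma norm_pow_doubling:
  fixes A :: "real mat"
  assumes A: "A \<in> carrier_mat n n" and sym: "transpose_mat A = A"
    and y: "y \<in> carrier_vec n" "y \<bullet> y = 1"
  shows "((A *\<^sub>v y) \<bullet> (A *\<^sub>v y)) ^ (2 ^ j) \<le> (A ^\<^sub>m (2 ^ j) *\<^sub>v y) \<bullet> (A ^\<^sub>m (2 ^ j) *\<^sub>v y)"
proof (induction j)
  case 0
  show ?case using A y by simp
next
  case (Suc j)
  let ?v = "\<lambda>m. A ^\<^sub>m m *\<^sub>v y"
  have square: "(?v m \<bullet> ?v m)\<^sup>2 \<le> ?v (2 * m) \<bullet> ?v (2 * m)" for m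
  proof -
    have "?v m \<bullet> ?v m = y \<bullet> (A ^\<^sub>m m *\<^sub>v ?v m)"
      by (rule symmetric_mat_vec_adjoint[of "A ^\<^sub>m m" n])
        (use A y sym in \<open>simp_all add: transpose_pow_mat_symmetric\<close>)
    also have "A ^\<^sub>m m *\<^sub>v ?v m = ?v (2 * m)"
      using A y by (simp add: mult_2 pow_mat_add[OF A] assoc_mult_mat_vec[of _ n n _ n])
    finally have "(?v m \<bullet> ?v m)\<^sup>2 = (y \<bullet> ?v (2 * m))\<^sup>2" by simp
    also have "\<dots> \<le> ?v (2 * m) \<bullet> ?v (2 * m)"
      using cauchy_schwarz_scalar_prod[of y n "?v (2 * m)"] A y by simp
    finally show ?thesis .
  qed
  have "((A *\<^sub>v y) \<bullet> (A *\<^sub>v y)) ^ (2 ^ Suc j) = (((A *\<^sub>v y) \<bullet> (A *\<^sub>v y)) ^ (2 ^ j))\<^sup>2"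
    by (simp add: power_mult[symmetric] mult.commute)
  also have "\<dots> \<le> (?v (2 ^ j) \<bullet> ?v (2 ^ j))\<^sup>2"
    using Suc.IH by (intro power_mono) (simp_all add: scalar_prod_self_nonneg)
  also have "\<dots> \<le> ?v (2 ^ Suc j) \<bullet> ?v (2 ^ Suc j)"
    using square by simp
  finally show ?case .
qed

lemma le_of_pow2_bounded:
  fixes g c K :: real
  assumes c: "0 \<le> c" and bound: "\<And>j. g ^ (2 ^ j) \<le> K * c ^ (2 ^ j)"
  shows "g \<le> c"
proof (rule ccontr)
  assume "\<not> g \<le> c"
  then have gc: "c < g" by simp
  show False
  proof (cases "c = 0")
    case True
    then show False using bound[of 0] gc by simp
  next
    case False
    then have c_pos: "0 < c" using c by simp
    let ?r = "g / c"
    have r: "1 < ?r" using gc c_pos by simp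
    obtain j where "K < ?r ^ j" using real_arch_pow[OF r] by blast
    also have "\<dots> \<le> ?r ^ (2 ^ j)"
      using r by (intro power_increasing) (simp_all add: less_imp_le_nat)
    also have "\<dots> \<le> K"
      using bound[of j] c_pos by (simp add: power_divide divide_le_eq)
    finally show False by simp
  qed
qed

locale symmetric_eigenpair =
  fixes A :: "real mat" and n :: nat and \<phi> :: "real vec" and \<mu> :: real
  assumes A_carrier: "A \<in> carrier_mat n n" and symmetric: "transpose_mat A = A"
    and \<phi>_carrier: "\<phi> \<in> carrier_vec n" and eigen: "A *\<^sub>v \<phi> = \<mu> \<cdot>\<^sub>v \<phi>"
    and \<phi>_unit: "\<phi> \<bullet> \<phi> = 1"
begin

lemma pow_eigen: "A ^\<^sub>m k *\<^sub>v \<phi> = \<mu> ^ k \<cdot>\<^sub>v \<phi>"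
proof -
  have "\<phi> \<noteq> 0\<^sub>v n" using \<phi>_unit \<phi>_carrier by auto
  then have "eigenvector A \<phi> \<mu>"
    using A_carrier \<phi>_carrier eigen unfolding eigenvector_def by auto
  then show ?thesis using eigenvector_pow[OF A_carrier] by blast
qed

lemma pow_row_eigen:
  assumes "i < n"
  shows "row (A ^\<^sub>m k) i \<bullet> \<phi> = \<mu> ^ k * \<phi> $ i"
proof -
  have "(A ^\<^sub>m k *\<^sub>v \<phi>) $ i = (\<mu> ^ k \<cdot>\<^sub>v \<phi>) $ i" by (simp only: pow_eigen)
  then show ?thesis using assms A_carrier \<phi>_carrier by simp
qed

lemma orthogonal_mult:
  assumes y: "y \<in> carrier_vec n" and "\<phi> \<bullet> y = 0"
  shows "\<phi> \<bullet> (A *\<^sub>v y) = 0"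
proof -
  have "\<phi> \<bullet> (A *\<^sub>v y) = (A *\<^sub>v \<phi>) \<bullet> y"
    using symmetric_mat_vec_adjoint[OF A_carrier symmetric \<phi>_carrier y] by simp
  also have "\<dots> = \<mu> * (\<phi> \<bullet> y)"
    using \<phi>_carrier y by (simp add: eigen)
  finally show ?thesis using assms by simp
qed

lemma pow_orthogonal_sum_sq:
  assumes y: "y \<in> carrier_vec n" "y \<bullet> y = 1" "\<phi> \<bullet> y = 0"
  shows "\<mu> ^ (2 * N) + (A ^\<^sub>m N *\<^sub>v y) \<bullet> (A ^\<^sub>m N *\<^sub>v y) \<le> trace_mat (A ^\<^sub>m (2 * N))"
proof -
  let ?B = "A ^\<^sub>m N"
  have B: "?B \<in> carrier_mat n n" using A_carrier by simp
  have By: "?B *\<^sub>v y \<in> carrier_vec n"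
    using A_carrier y(1) by simp
  have "\<mu> ^ (2 * N) = \<mu> ^ (2 * N) * (\<phi> \<bullet> \<phi>)" by (simp add: \<phi>_unit)
  with By have "\<mu> ^ (2 * N) + (?B *\<^sub>v y) \<bullet> (?B *\<^sub>v y) = (\<Sum>i<n. (row ?B i \<bullet> \<phi>)\<^sup>2 + (row ?B i \<bullet> y)\<^sup>2)"
    using A_carrier \<phi>_carrier y
    by (simp add: scalar_prod_self_eq_sum_sq[of _ n] pow_row_eigen sum.distrib sum_distrib_left
        power_mult_distrib power_mult mult.commute)
  also have "\<dots> \<le> (\<Sum>i<n. row ?B i \<bullet> row ?B i)"
    using B \<phi>_carrier y \<phi>_unit by (intro sum_mono bessel_orthonormal_pair[of _ n]) auto
  also have "\<dots> = trace_mat (?B * ?B)"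
    by (rule trace_square_symmetric[OF B transpose_pow_mat_symmetric[OF A_carrier symmetric], symmetric])
  also have "?B * ?B = A ^\<^sub>m (2 * N)"
    by (simp add: pow_mat_add[OF A_carrier, symmetric] mult_2)
  finally show ?thesis .
qed

end

text \<open>
  For a unit vector y orthogonal to \<phi>, \<open>norm_pow_doubling\<close> and the trace bound give
  (|A y|^2)^(2^j) \<le> K (M^2)^(2^j) for every j, which is only possible if |A y| \<le> M.
\<close>

locale spectral_gap = symmetric_eigenpair +
  fixes K M :: real
  assumes M_nonneg: "0 \<le> M"
    and trace_pow_bound: "\<And>N. trace_mat (A ^\<^sub>m (2 * N)) \<le> \<mu> ^ (2 * N) + K * M ^ (2 * N)"
begin

lemma contraction_unit:
  assumes y: "y \<in> carrier_vec n" "y \<bullet> y = 1" "\<phi> \<bullet> y = 0"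
  shows "(A *\<^sub>v y) \<bullet> (A *\<^sub>v y) \<le> M\<^sup>2"
proof (rule le_of_pow2_bounded[where K = K])
  fix j :: nat
  have "((A *\<^sub>v y) \<bullet> (A *\<^sub>v y)) ^ (2 ^ j) \<le> (A ^\<^sub>m (2 ^ j) *\<^sub>v y) \<bullet> (A ^\<^sub>m (2 ^ j) *\<^sub>v y)"
    by (rule norm_pow_doubling[OF A_carrier symmetric y(1,2)])
  also have "\<dots> \<le> K * M ^ (2 * 2 ^ j)"
    using pow_orthogonal_sum_sq[OF y, of "2 ^ j"] trace_pow_bound[of "2 ^ j"] by simp
  finally show "((A *\<^sub>v y) \<bullet> (A *\<^sub>v y)) ^ (2 ^ j) \<le> K * (M\<^sup>2) ^ (2 ^ j)"
    by (simp add: power_mult)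
qed simp

lemma contraction:
  assumes y: "y \<in> carrier_vec n" and \<phi>y: "\<phi> \<bullet> y = 0"
  shows "(A *\<^sub>v y) \<bullet> (A *\<^sub>v y) \<le> M\<^sup>2 * (y \<bullet> y)"
proof (cases "y = 0\<^sub>v n")
  case True
  have "A *\<^sub>v 0\<^sub>v n = 0\<^sub>v n"
    using A_carrier by (intro eq_vecI) auto
  then show ?thesis using True by simp
next
  case False
  then have "0 < y \<bullet> y"
    using scalar_prod_self_eq_0_iff[OF y] scalar_prod_self_nonneg[of y] by linarith
  then obtain s where s: "0 < s" "s\<^sup>2 = y \<bullet> y"
    by (metis real_sqrt_gt_0_iff real_sqrt_pow2 less_eq_real_def)
  let ?u = "(1 / s) \<cdot>\<^sub>v y"
  have "(A *\<^sub>v ?u) \<bullet> (A *\<^sub>v ?u) \<le> M\<^sup>2"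
    using y \<phi>_carrier s \<phi>y by (intro contraction_unit) (auto simp: power2_eq_square)
  moreover have "A *\<^sub>v ?u = (1 / s) \<cdot>\<^sub>v (A *\<^sub>v y)"
    by (rule mult_mat_vec[OF A_carrier y])
  ultimately have "(A *\<^sub>v y) \<bullet> (A *\<^sub>v y) / s\<^sup>2 \<le> M\<^sup>2"
    using A_carrier y by (simp add: power2_eq_square)
  then have "(A *\<^sub>v y) \<bullet> (A *\<^sub>v y) \<le> M\<^sup>2 * s\<^sup>2"
    using s(1) by (simp add: pos_divide_le_eq)
  then show ?thesis
    using s(2) by simp
qed

lemma pow_contraction:
  assumes "y \<in> carrier_vec n" and "\<phi> \<bullet> y = 0"
  shows "(A ^\<^sub>m l *\<^sub>v y) \<bullet> (A ^\<^sub>m l *\<^sub>v y) \<le> M ^ (2 * l) * (y \<bullet> y)"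
  using assms
proof (induction l arbitrary: y)
  case 0
  then show ?case using A_carrier by simp
next
  case (Suc l)
  have Ay: "A *\<^sub>v y \<in> carrier_vec n" "\<phi> \<bullet> (A *\<^sub>v y) = 0"
    using Suc.prems A_carrier orthogonal_mult by auto
  have "A ^\<^sub>m Suc l *\<^sub>v y = A ^\<^sub>m l *\<^sub>v (A *\<^sub>v y)"
    using Suc.prems A_carrier by (simp add: assoc_mult_mat_vec[of _ n n _ n])
  then have "(A ^\<^sub>m Suc l *\<^sub>v y) \<bullet> (A ^\<^sub>m Suc l *\<^sub>v y) \<le> M ^ (2 * l) * ((A *\<^sub>v y) \<bullet> (A *\<^sub>v y))"
    using Suc.IH[OF Ay] by simp
  also have "\<dots> \<le> M ^ (2 * l) * (M\<^sup>2 * (y \<bullet> y))"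
    using contraction[OF Suc.prems] by (intro mult_left_mono) simp_all
  finally show ?case
    by (simp add: power2_eq_square mult_ac)
qed

lemma pow_entry_approx:
  assumes w: "w < n" and x: "x < n"
  shows "\<bar>(A ^\<^sub>m l) $$ (w, x) - \<mu> ^ l * \<phi> $ w * \<phi> $ x\<bar> \<le> M ^ l"
proof -
  let ?e = "unit_vec n x" and ?B = "A ^\<^sub>m l"
  \<comment> \<open>the error term is the w-th entry of A^l applied to the part of e_x orthogonal to \<phi>\<close>
  let ?y = "?e - (\<phi> $ x) \<cdot>\<^sub>v \<phi>"
  have y: "?y \<in> carrier_vec n" using \<phi>_carrier by simp
  have \<phi>e: "\<phi> \<bullet> ?e = \<phi> $ x" "?e \<bullet> \<phi> = \<phi> $ x"
    using \<phi>_carrier x by simp_all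
  have \<phi>y: "\<phi> \<bullet> ?y = 0"
    using \<phi>_carrier \<phi>e \<phi>_unit by (simp add: scalar_prod_minus_distrib[of _ n])
  have yy: "?y \<bullet> ?y \<le> 1"
    using scalar_prod_diff_smult_self[of ?e n \<phi> "\<phi> $ x"] \<phi>_carrier \<phi>e \<phi>_unit x
    by (simp add: power2_eq_square)
  have "(?B *\<^sub>v ?y) $ w = ?B $$ (w, x) - \<phi> $ x * (\<mu> ^ l * \<phi> $ w)"
    using A_carrier \<phi>_carrier w x
    by (simp add: mult_minus_distrib_mat_vec[of _ n n] mult_mat_vec pow_row_eigen)
  moreover have "?B *\<^sub>v ?y \<in> carrier_vec n"
    using A_carrier y by simp
  ultimately have "(?B $$ (w, x) - \<mu> ^ l * \<phi> $ w * \<phi> $ x)\<^sup>2 \<le> (?B *\<^sub>v ?y) \<bullet> (?B *\<^sub>v ?y)"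
    using vec_index_sq_le_scalar_prod_self[of "?B *\<^sub>v ?y" n w] w by (simp add: mult_ac)
  also have "\<dots> \<le> M ^ (2 * l) * (?y \<bullet> ?y)"
    by (rule pow_contraction[OF y \<phi>y])
  also have "\<dots> \<le> (M ^ l)\<^sup>2"
    using yy by (simp add: mult_left_le power_mult power2_eq_square mult.commute[of 2])
  finally have "\<bar>(A ^\<^sub>m l) $$ (w, x) - \<mu> ^ l * \<phi> $ w * \<phi> $ x\<bar> \<le> \<bar>M ^ l\<bar>"
    by (simp only: abs_le_square_iff)
  then show ?thesis
    using M_nonneg by simp
qed

end

lemma pow_entry_approx_sorted_eigenvalues:
  fixes A :: "real mat" and \<phi> :: "real vec"
  defines "es \<equiv> rev (sorted_list_of_multiset (proots (char_poly A)))"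
  assumes A: "A \<in> carrier_mat n n" and sym: "transpose_mat A = A"
    and \<phi>: "\<phi> \<in> carrier_vec n" "A *\<^sub>v \<phi> = es ! 0 \<cdot>\<^sub>v \<phi>" "\<phi> \<bullet> \<phi> = 1"
    and w: "w < n" and x: "x < n"
  shows "\<bar>(A ^\<^sub>m l) $$ (w, x) - es ! 0 ^ l * \<phi> $ w * \<phi> $ x\<bar> \<le> (max \<bar>es ! 1\<bar> \<bar>es ! (n - 1)\<bar>) ^ l"
proof -
  define M where "M = max \<bar>es ! 1\<bar> \<bar>es ! (n - 1)\<bar>"
  have len: "length es = n"
    using size_proots_real_symmetric[OF A sym] unfolding es_def
    by (metis length_rev mset_sorted_list_of_multiset size_mset)
  have sorted: "sorted (rev es)" by (simp add: es_def)
  have small: "\<bar>es ! i\<bar> \<le> M" if "1 \<le> i" "i < n" for i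
  proof -
    have "es ! i \<le> es ! 1" using sorted_rev_nth_mono[OF sorted, of 1 i] that len by simp
    moreover have "es ! (n - 1) \<le> es ! i" using sorted_rev_nth_mono[OF sorted, of i "n - 1"] that len by simp
    ultimately show ?thesis unfolding M_def by linarith
  qed
  have trace_bound: "trace_mat (A ^\<^sub>m (2 * N)) \<le> es ! 0 ^ (2 * N) + real (n - 1) * M ^ (2 * N)" for N
  proof -
    have "proots (char_poly A) = mset es" by (simp add: es_def)
    then have "trace_mat (A ^\<^sub>m (2 * N)) = (\<Sum>i<n. es ! i ^ (2 * N))"
      using trace_pow_real_symmetric[OF A sym] len
      by (simp flip: mset_map add: sum_mset_sum_list sum_list_sum_nth atLeast0LessThan)
    also have "\<dots> = es ! 0 ^ (2 * N) + (\<Sum>i\<in>{1..<n}. es ! i ^ (2 * N))"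
      using w by (simp add: lessThan_atLeast0 sum.atLeast_Suc_lessThan)
    also have "(\<Sum>i\<in>{1..<n}. es ! i ^ (2 * N)) \<le> (\<Sum>i\<in>{1..<n}. M ^ (2 * N))"
    proof (rule sum_mono)
      fix i assume "i \<in> {1..<n}"
      then have "\<bar>es ! i\<bar> ^ (2 * N) \<le> M ^ (2 * N)"
        using small by (intro power_mono) auto
      then show "es ! i ^ (2 * N) \<le> M ^ (2 * N)"
        by (simp add: power_even_abs)
    qed
    finally show ?thesis by simp
  qed
  interpret spectral_gap A n \<phi> "es ! 0" "real (n - 1)" M
    by unfold_locales (use A sym \<phi> trace_bound in \<open>auto simp: M_def\<close>)
  show ?thesis
    using pow_entry_approx[OF w x] unfolding M_def .
qed

section \<open>Adjacency matrices and random walks\<close>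

lemma adj_mat_carrier: "adj_mat n E \<in> carrier_mat n n"
  by (simp add: adj_mat_def)

lemma adj_mat_entry: "i < n \<Longrightarrow> j < n \<Longrightarrow> adj_mat n E $$ (i, j) = (if E i j then 1 else 0)"
  by (simp add: adj_mat_def)

lemma adj_mat_symmetric: "simple_graph n E \<Longrightarrow> transpose_mat (adj_mat n E) = adj_mat n E"
  by (intro eq_matI) (auto simp: adj_mat_def simple_graph_def)

lemma adj_mat_row_sum:
  assumes "i < n"
  shows "(\<Sum>j<n. adj_mat n E $$ (i, j)) = real (deg n E i)"
proof -
  have "(\<Sum>j<n. adj_mat n E $$ (i, j)) = (\<Sum>j<n. if E i j then 1 else 0)"
    using assms by (intro sum.cong) (simp_all add: adj_mat_entry)
  also have "\<dots> = real (card {j\<in>{..<n}. E i j})"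
    using sum.inter_filter[of "{..<n}" "\<lambda>_. 1 :: real" "E i"] by simp
  also have "{j\<in>{..<n}. E i j} = nbhd n E i"
    by (auto simp: nbhd_def)
  finally show ?thesis
    by (simp add: deg_def)
qed

lemma adj_mat_pow_Suc_entry:
  assumes "i < n" and "j < n"
  shows "(adj_mat n E ^\<^sub>m Suc t) $$ (i, j) = (\<Sum>k<n. (adj_mat n E ^\<^sub>m t) $$ (i, k) * (if E k j then 1 else 0))"
  using assms adj_mat_carrier[of n E]
  by (auto simp: scalar_prod_def atLeast0LessThan adj_mat_entry intro!: sum.cong)

lemma adj_mat_pow_nonneg: "i < n \<Longrightarrow> j < n \<Longrightarrow> 0 \<le> (adj_mat n E ^\<^sub>m t) $$ (i, j)"
proof (induction t arbitrary: j)
  case 0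
  then show ?case using adj_mat_carrier[of n E] by simp
next
  case (Suc t)
  then show ?case
    by (simp only: adj_mat_pow_Suc_entry) (auto intro!: sum_nonneg)
qed

lemma walk_prob_nonneg: "0 \<le> walk_prob n E w t x"
  by (induction t arbitrary: x) (auto intro!: sum_nonneg)

lemma walk_prob_le_adj_pow:
  assumes dlo: "0 < dlo" and deg: "\<forall>y<n. dlo \<le> real (deg n E y)"
    and w: "w < n" and x: "x < n"
  shows "walk_prob n E w t x \<le> (adj_mat n E ^\<^sub>m t) $$ (w, x) / dlo ^ t"
  using x
proof (induction t arbitrary: x)
  case 0
  then show ?case using w adj_mat_carrier[of n E] by simp
next
  case (Suc t)
  have "walk_prob n E w (Suc t) x
      \<le> (\<Sum>y<n. (adj_mat n E ^\<^sub>m t) $$ (w, y) / dlo ^ t * (if E y x then 1 / dlo else 0))"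
  proof (unfold walk_prob.simps, intro sum_mono)
    fix y assume y: "y \<in> {..<n}"
    have "1 / real (deg n E y) \<le> 1 / dlo"
      using deg y dlo by (auto intro!: divide_left_mono)
    moreover have "0 \<le> (adj_mat n E ^\<^sub>m t) $$ (w, y) / dlo ^ t"
      using adj_mat_pow_nonneg[of w n y E t] w y dlo by simp
    ultimately have "walk_prob n E w t y * (1 / real (deg n E y))
        \<le> (adj_mat n E ^\<^sub>m t) $$ (w, y) / dlo ^ t * (1 / dlo)"
      using Suc.IH[of y] y by (intro mult_mono) simp_all
    then show "walk_prob n E w t y * (if E y x then 1 / real (deg n E y) else 0)
        \<le> (adj_mat n E ^\<^sub>m t) $$ (w, y) / dlo ^ t * (if E y x then 1 / dlo else 0)"
      by (simp add: mult.commute)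
  qed
  also have "\<dots> = (adj_mat n E ^\<^sub>m Suc t) $$ (w, x) / dlo ^ Suc t"
    unfolding adj_mat_pow_Suc_entry[OF w Suc.prems] sum_divide_distrib by (intro sum.cong) auto
  finally show ?case .
qed

lemma walk_prob_ge_adj_pow:
  assumes deg: "\<forall>y<n. 0 < real (deg n E y) \<and> real (deg n E y) \<le> dhi"
    and w: "w < n" and x: "x < n"
  shows "(adj_mat n E ^\<^sub>m t) $$ (w, x) / dhi ^ t \<le> walk_prob n E w t x"
  using x
proof (induction t arbitrary: x)
  case 0
  then show ?case using w adj_mat_carrier[of n E] by simp
next
  case (Suc t)
  have "(adj_mat n E ^\<^sub>m Suc t) $$ (w, x) / dhi ^ Suc t
      = (\<Sum>y<n. (adj_mat n E ^\<^sub>m t) $$ (w, y) / dhi ^ t * (if E y x then 1 / dhi else 0))"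
    unfolding adj_mat_pow_Suc_entry[OF w Suc.prems] sum_divide_distrib by (intro sum.cong) auto
  also have "\<dots> \<le> walk_prob n E w (Suc t) x"
  proof (unfold walk_prob.simps, intro sum_mono)
    fix y assume y: "y \<in> {..<n}"
    have "0 < real (deg n E y)" and "real (deg n E y) \<le> dhi"
      using deg y by auto
    then have "1 / dhi \<le> 1 / real (deg n E y)" and "0 \<le> 1 / dhi"
      by (auto intro!: divide_left_mono)
    moreover have "0 \<le> walk_prob n E w t y"
      by (rule walk_prob_nonneg)
    ultimately have "(adj_mat n E ^\<^sub>m t) $$ (w, y) / dhi ^ t * (1 / dhi)
        \<le> walk_prob n E w t y * (1 / real (deg n E y))"
      using Suc.IH[of y] y by (intro mult_mono) simp_all
    then show "(adj_mat n E ^\<^sub>m t) $$ (w, y) / dhi ^ t * (if E y x then 1 / dhi else 0)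
        \<le> walk_prob n E w t y * (if E y x then 1 / real (deg n E y) else 0)"
      by (simp add: mult.commute)
  qed
  finally show ?case .
qed

lemma eigenvalue_between_row_sums:
  fixes A :: "real mat"
  assumes A: "A \<in> carrier_mat n n" and nonneg: "\<And>i j. i < n \<Longrightarrow> j < n \<Longrightarrow> 0 \<le> A $$ (i, j)"
    and rows: "\<And>i. i < n \<Longrightarrow> dlo \<le> (\<Sum>j<n. A $$ (i, j)) \<and> (\<Sum>j<n. A $$ (i, j)) \<le> dhi"
    and u: "u \<in> carrier_vec n" "A *\<^sub>v u = \<mu> \<cdot>\<^sub>v u"
    and entries: "\<And>i. i < n \<Longrightarrow> a \<le> u $ i \<and> u $ i \<le> b"
    and pos: "0 < dlo" "0 < a" and w: "w < n"
  shows "dlo * a \<le> \<mu> * b" and "\<mu> * a \<le> dhi * b"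
proof -
  have "(A *\<^sub>v u) $ w = (\<mu> \<cdot>\<^sub>v u) $ w" by (simp only: u)
  then have eq: "\<mu> * u $ w = (\<Sum>j<n. A $$ (w, j) * u $ j)"
    using A u(1) w by (simp add: scalar_prod_def atLeast0LessThan)
  have "dlo * a \<le> (\<Sum>j<n. A $$ (w, j)) * a"
    using rows[OF w] pos by simp
  also have "\<dots> \<le> \<mu> * u $ w"
    unfolding eq sum_distrib_right using entries nonneg w by (intro sum_mono mult_left_mono) auto
  finally have lo: "dlo * a \<le> \<mu> * u $ w" .
  have "\<mu> * u $ w \<le> (\<Sum>j<n. A $$ (w, j)) * b"
    unfolding eq sum_distrib_right using entries nonneg w by (intro sum_mono mult_left_mono) auto
  also have "\<dots> \<le> dhi * b"
    using rows[OF w] entries[OF w] pos by (intro mult_right_mono) auto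
  finally have hi: "\<mu> * u $ w \<le> dhi * b" .
  have "0 < \<mu>"
    using lo pos entries[OF w] by (smt (verit) mult_nonpos_nonneg mult_pos_pos)
  then show "dlo * a \<le> \<mu> * b" and "\<mu> * a \<le> dhi * b"
    using lo hi entries[OF w] by (smt (verit) mult_left_mono)+
qed

lemma top_eigenvalue_bounds:
  fixes q t \<mu> :: real and \<phi> :: "real vec"
  assumes q: "0 < q" and t: "0 \<le> t" "t < 1"
    and deg: "\<forall>v<n. q * (1 - t) \<le> deg n E v \<and> deg n E v \<le> q * (1 + t)"
    and \<phi>: "\<phi> \<in> carrier_vec n" "adj_mat n E *\<^sub>v \<phi> = \<mu> \<cdot>\<^sub>v \<phi>"
    and \<phi>_entries: "\<forall>i<n. \<bar>sqrt n * \<phi> $ i - 1\<bar> \<le> t" and w: "w < n"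
  shows "q * (1 - t) * (1 - t) \<le> \<mu> * (1 + t)" and "\<mu> * (1 - t) \<le> q * (1 + t) * (1 + t)"
proof -
  have sqrt_n: "0 < sqrt n" using w by simp
  have nonneg: "0 \<le> adj_mat n E $$ (i, j)" if "i < n" "j < n" for i j
    using that by (simp add: adj_mat_entry)
  have rows: "q * (1 - t) \<le> (\<Sum>j<n. adj_mat n E $$ (i, j)) \<and> (\<Sum>j<n. adj_mat n E $$ (i, j)) \<le> q * (1 + t)"
    if "i < n" for i
    using that deg by (simp add: adj_mat_row_sum)
  have entries: "(1 - t) / sqrt n \<le> \<phi> $ i \<and> \<phi> $ i \<le> (1 + t) / sqrt n" if "i < n" for i
    using \<phi>_entries that sqrt_n by (auto simp: abs_le_iff divide_le_eq le_divide_eq mult.commute)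
  have pos: "0 < q * (1 - t)" "0 < (1 - t) / sqrt n"
    using q t sqrt_n by auto
  note eigenvalue_between_row_sums[OF adj_mat_carrier nonneg rows \<phi> entries pos w]
  then show "q * (1 - t) * (1 - t) \<le> \<mu> * (1 + t)" and "\<mu> * (1 - t) \<le> q * (1 + t) * (1 + t)"
    using sqrt_n by (simp_all add: divide_le_cancel)
qed

section \<open>The asymptotic estimate\<close>

lemma one_plus_pow_le:
  fixes x :: real
  assumes "0 \<le> x" and "x \<le> 1"
  shows "(1 + x) ^ m \<le> 1 + (2 ^ m - 1) * x"
proof (induction m)
  case (Suc m)
  have "(1 + x) ^ Suc m \<le> (1 + x) * (1 + (2 ^ m - 1) * x)"
    using Suc.IH assms by (simp add: mult_left_mono)
  also have "\<dots> = 1 + 2 ^ m * x + (2 ^ m - 1) * x * x"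
    by (simp add: algebra_simps)
  also have "\<dots> \<le> 1 + 2 ^ m * x + (2 ^ m - 1) * x"
    using assms by (simp add: mult_left_le)
  finally show ?case by (simp add: algebra_simps)
qed simp

lemma ratio_pow_bounds:
  fixes t :: real
  assumes t: "0 \<le> t" "4 * t \<le> 1"
  shows "((1 + t) / (1 - t)) ^ N \<le> 1 + 2 ^ (N + 2) * t"
    and "1 - 2 ^ (N + 2) * t \<le> ((1 - t) / (1 + t)) ^ N"
proof -
  have "t * (4 * t) \<le> t * 1"
    using t by (intro mult_left_mono) auto
  then have "1 + t \<le> (1 + 4 * t) * (1 - t)"
    using t by (simp add: algebra_simps)
  then have "(1 + t) / (1 - t) \<le> 1 + 4 * t"
    using t by (simp add: divide_le_eq)
  then have "((1 + t) / (1 - t)) ^ N \<le> (1 + 4 * t) ^ N"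
    using t by (intro power_mono) auto
  also have "\<dots> \<le> 1 + (2 ^ N - 1) * (4 * t)"
    using t by (intro one_plus_pow_le) auto
  also have "\<dots> \<le> 1 + 2 ^ (N + 2) * t"
    using t by (simp add: algebra_simps)
  finally show "((1 + t) / (1 - t)) ^ N \<le> 1 + 2 ^ (N + 2) * t" .
  have "N \<le> 2 ^ N"
    using less_exp[of N] by simp
  then have "real N \<le> 2 ^ N"
    by (metis of_nat_le_iff of_nat_numeral of_nat_power)
  moreover have "(2 :: real) ^ (N + 2) = 4 * 2 ^ N"
    by (simp add: power_add)
  ultimately have "2 * real N \<le> 2 ^ (N + 2)"
    using zero_le_power[of "2 :: real" N] by linarith
  then have "2 * real N * t \<le> 2 ^ (N + 2) * t"
    using t by (intro mult_right_mono) auto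
  then have "1 - 2 ^ (N + 2) * t \<le> 1 + real N * (- 2 * t)"
    by (simp add: algebra_simps)
  also have "\<dots> \<le> (1 - 2 * t) ^ N"
    using Bernoulli_inequality[of "- 2 * t" N] t by simp
  also have "\<dots> \<le> ((1 - t) / (1 + t)) ^ N"
    using t by (intro power_mono) (simp_all add: le_divide_eq algebra_simps)
  finally show "1 - 2 ^ (N + 2) * t \<le> ((1 - t) / (1 + t)) ^ N" .
qed

lemma product_near_one:
  fixes \<alpha> \<beta> t :: real
  assumes "\<bar>\<alpha> - 1\<bar> \<le> t" and "\<bar>\<beta> - 1\<bar> \<le> t" and "t \<le> 1"
  shows "(1 - t)\<^sup>2 \<le> \<alpha> * \<beta>" and "\<alpha> * \<beta> \<le> (1 + t)\<^sup>2"
proof -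
  have "1 - t \<le> \<alpha>" "\<alpha> \<le> 1 + t" "1 - t \<le> \<beta>" "\<beta> \<le> 1 + t"
    using assms by auto
  then have "(1 - t) * (1 - t) \<le> \<alpha> * \<beta>" "\<alpha> * \<beta> \<le> (1 + t) * (1 + t)"
    using assms(3) by (intro mult_mono; linarith)+
  then show "(1 - t)\<^sup>2 \<le> \<alpha> * \<beta>" and "\<alpha> * \<beta> \<le> (1 + t)\<^sup>2"
    by (simp_all add: power2_eq_square)
qed

text \<open>
  In the application P, m, a and b are P_w[X_l = x], (A^l)_wx, \<phi>_w and \<phi>_x, q = pn,
  and \<mu> = \<lambda>1.
\<close>

locale walk_estimate =
  fixes n l :: nat and t q \<mu> M m P a b E :: real
  assumes t: "0 \<le> t" "4 * t \<le> 1" and q: "0 < q" and n: "0 < n"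
    and P: "m / (q * (1 + t)) ^ l \<le> P" "P \<le> m / (q * (1 - t)) ^ l"
    and m: "\<bar>m - \<mu> ^ l * a * b\<bar> \<le> M ^ l"
    and a: "\<bar>sqrt n * a - 1\<bar> \<le> t" and b: "\<bar>sqrt n * b - 1\<bar> \<le> t"
    and \<mu>: "q * (1 - t) * (1 - t) \<le> \<mu> * (1 + t)" "\<mu> * (1 - t) \<le> q * (1 + t) * (1 + t)"
    and E: "n * M ^ l / (q * (1 - t)) ^ l \<le> E"
begin

abbreviation \<rho> :: real where "\<rho> \<equiv> (1 + t) / (1 - t)"

lemma \<rho>_bounds: "0 < \<rho>" "1 + t \<le> \<rho>" "1 / \<rho> \<le> 1 - t" "1 / \<rho> = (1 - t) / (1 + t)"
  using divide_left_mono[of "1 - t" 1 "1 + t"] divide_left_mono[of 1 "1 + t" "1 - t"] t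
  by simp_all

lemma denominators_pos: "0 < q * (1 - t)" "0 < q * (1 + t)"
  using q t by auto

lemma product_bounds: "(1 - t)\<^sup>2 \<le> n * a * b" "n * a * b \<le> (1 + t)\<^sup>2" "0 \<le> n * a * b"
proof -
  have eq: "(sqrt n * a) * (sqrt n * b) = n * a * b"
    by (simp add: algebra_simps)
  have "t \<le> 1" using t by simp
  from product_near_one[OF a b this, unfolded eq]
  show "(1 - t)\<^sup>2 \<le> n * a * b" "n * a * b \<le> (1 + t)\<^sup>2" .
  then show "0 \<le> n * a * b"
    using zero_le_power2 order_trans by blast
qed

lemma \<mu>_pos: "0 < \<mu>"
proof -
  have "0 < q * (1 - t) * (1 - t)"
    using denominators_pos t by simp
  then have "0 < \<mu> * (1 + t)"
    using \<mu>(1) by linarith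
  then show ?thesis
    using t by (simp add: zero_less_mult_iff)
qed

lemma eigenvalue_ratio_bounds: "\<mu> / (q * (1 - t)) \<le> \<rho>\<^sup>2" "(1 / \<rho>)\<^sup>2 \<le> \<mu> / (q * (1 + t))"
proof -
  have "\<mu> \<le> q * (1 + t) * (1 + t) / (1 - t)"
    using \<mu>(2) t by (simp add: pos_le_divide_eq)
  then have "\<mu> / (q * (1 - t)) \<le> q * (1 + t) * (1 + t) / (1 - t) / (q * (1 - t))"
    using denominators_pos by (intro divide_right_mono) auto
  also have "\<dots> = (q * ((1 + t) * (1 + t))) / (q * ((1 - t) * (1 - t)))"
    by (simp add: divide_divide_eq_left mult_ac)
  also have "\<dots> = \<rho>\<^sup>2"
    using q by (simp add: power2_eq_square)
  finally show "\<mu> / (q * (1 - t)) \<le> \<rho>\<^sup>2" .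
  have "(1 / \<rho>)\<^sup>2 = (q * ((1 - t) * (1 - t))) / (q * ((1 + t) * (1 + t)))"
    using q by (simp add: \<rho>_bounds(4) power2_eq_square)
  also have "\<dots> = q * (1 - t) * (1 - t) / (1 + t) / (q * (1 + t))"
    by (simp add: divide_divide_eq_left mult_ac)
  also have "\<dots> \<le> \<mu> / (q * (1 + t))"
    using \<mu>(1) t denominators_pos by (intro divide_right_mono) (simp_all add: pos_divide_le_eq)
  finally show "(1 / \<rho>)\<^sup>2 \<le> \<mu> / (q * (1 + t))" .
qed

lemma upper_estimate: "n * P \<le> 1 + 2 ^ (2 * l + 4) * t + E"
proof -
  have "n * P \<le> n * (m / (q * (1 - t)) ^ l)"
    using P(2) n by (intro mult_left_mono) auto
  also have "\<dots> \<le> n * ((\<mu> ^ l * a * b + M ^ l) / (q * (1 - t)) ^ l)"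
    using m denominators_pos by (intro mult_left_mono divide_right_mono) auto
  also have "\<dots> = (\<mu> / (q * (1 - t))) ^ l * (n * a * b) + n * M ^ l / (q * (1 - t)) ^ l"
    by (simp add: power_divide add_divide_distrib algebra_simps)
  also have "\<dots> \<le> (\<rho>\<^sup>2) ^ l * \<rho>\<^sup>2 + E"
  proof -
    have "(1 + t)\<^sup>2 \<le> \<rho>\<^sup>2" using \<rho>_bounds(2) t by (intro power_mono) auto
    then have "n * a * b \<le> \<rho>\<^sup>2" using product_bounds by linarith
    then show ?thesis
      using eigenvalue_ratio_bounds \<mu>_pos denominators_pos product_bounds E
      by (intro add_mono mult_mono power_mono) auto
  qed
  also have "(\<rho>\<^sup>2) ^ l * \<rho>\<^sup>2 = \<rho> ^ (2 * l + 2)"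
    by (simp only: power_add power_mult)
  also have "\<dots> \<le> 1 + 2 ^ (2 * l + 4) * t"
    using ratio_pow_bounds(1)[OF t, of "2 * l + 2"] by (simp add: power_add)
  finally show ?thesis by simp
qed

lemma lower_estimate: "1 - 2 ^ (2 * l + 4) * t - E \<le> n * P"
proof -
  have "0 \<le> M ^ l" using m by linarith
  then have "n * M ^ l / (q * (1 + t)) ^ l \<le> n * M ^ l / (q * (1 - t)) ^ l"
    using denominators_pos t q by (intro divide_left_mono power_mono mult_left_mono) auto
  then have E': "n * M ^ l / (q * (1 + t)) ^ l \<le> E"
    using E by linarith
  have "1 - 2 ^ (2 * l + 4) * t \<le> (1 / \<rho>) ^ (2 * l + 2)"
    using ratio_pow_bounds(2)[OF t, of "2 * l + 2"] by (simp add: \<rho>_bounds(4) power_add)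
  also have "\<dots> = ((1 / \<rho>)\<^sup>2) ^ l * (1 / \<rho>)\<^sup>2"
    by (simp only: power_add power_mult)
  also have "\<dots> \<le> (\<mu> / (q * (1 + t))) ^ l * (n * a * b)"
  proof -
    have "(1 / \<rho>)\<^sup>2 \<le> (1 - t)\<^sup>2" using \<rho>_bounds t by (intro power_mono) auto
    then have "(1 / \<rho>)\<^sup>2 \<le> n * a * b" using product_bounds by linarith
    then show ?thesis
      using eigenvalue_ratio_bounds \<mu>_pos denominators_pos product_bounds
      by (intro mult_mono power_mono) auto
  qed
  also have "\<dots> = n * ((\<mu> ^ l * a * b - M ^ l) / (q * (1 + t)) ^ l) + n * M ^ l / (q * (1 + t)) ^ l"
    by (simp add: power_divide diff_divide_distrib algebra_simps)
  also have "\<dots> \<le> n * (m / (q * (1 + t)) ^ l) + E"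
    using m denominators_pos E' by (intro add_mono mult_left_mono divide_right_mono) auto
  also have "\<dots> \<le> n * P + E"
    using P(1) n by (intro add_right_mono mult_left_mono) auto
  finally show ?thesis by simp
qed

lemma relative_error: "\<bar>n * P - 1\<bar> \<le> 2 ^ (2 * l + 4) * t + E"
  using upper_estimate lower_estimate by (simp add: abs_le_iff)

end

lemma edge_probability_consequences:
  fixes n k :: nat and p :: real
  assumes n: "3 \<le> n" and k: "0 < k"
    and p: "ln n / real n powr ((real k - 1) / real k) \<le> p"
  shows "1 \<le> ln n" and "1 < p * n" and "ln n / k \<le> ln (p * n)" and "real n \<le> (p * n) ^ k"
    and "ln n / (p * n) \<le> 1 / real n powr (1 / k)"
proof -
  have n0: "0 < real n" using n by simp
  have "exp 1 \<le> real n" using exp_le n by linarith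
  then show L: "1 \<le> ln n"
    using n0 by (metis ln_exp ln_le_cancel_iff exp_gt_zero)
  have root: "real n / real n powr ((real k - 1) / real k) = real n powr (1 / k)"
  proof -
    have "real n / real n powr ((real k - 1) / real k) = real n powr (1 - (real k - 1) / real k)"
      using n0 by (simp add: powr_diff)
    also have "1 - (real k - 1) / real k = 1 / real k" using k by (simp add: field_simps)
    finally show ?thesis .
  qed
  have root_gt: "1 < real n powr (1 / k)"
    using n k by (intro gr_one_powr) auto
  have "ln n * real n powr (1 / k) = ln n / real n powr ((real k - 1) / real k) * real n"
    by (simp flip: root)
  also have "\<dots> \<le> p * n"
    using p n0 by (intro mult_right_mono) auto
  finally have q_ge: "ln n * real n powr (1 / k) \<le> p * n" .
  moreover have "real n powr (1 / k) \<le> ln n * real n powr (1 / k)"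
    using mult_right_mono[OF L, of "real n powr (1 / k)"] by simp
  ultimately have q_root: "real n powr (1 / k) \<le> p * n" by linarith
  then show q: "1 < p * n" using root_gt by linarith
  then have p0: "0 < p"
    using n0 by (smt (verit) mult_nonpos_nonneg)
  have "ln (real n powr (1 / k)) \<le> ln (p * n)"
    using q_root root_gt n0 by (subst ln_le_cancel_iff) auto
  then show "ln n / k \<le> ln (p * n)"
    by (simp add: ln_powr)
  have "real n = (real n powr (1 / k)) ^ k"
    using n0 k by (simp add: powr_realpow[symmetric] powr_powr)
  also have "\<dots> \<le> (p * n) ^ k"
    using q_root root_gt by (intro power_mono) auto
  finally show "real n \<le> (p * n) ^ k" .
  have "ln n / (p * n) \<le> ln n / (ln n * real n powr (1 / k))"
    using q_ge L root_gt p0 n by (intro divide_left_mono mult_pos_pos) auto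
  then show "ln n / (p * n) \<le> 1 / real n powr (1 / k)"
    using L by simp
qed

lemma powr_three_halves:
  fixes x :: real
  assumes "0 \<le> x"
  shows "x powr (3 / 2) = x * sqrt x"
proof (cases "x = 0")
  case False
  have "x powr (3 / 2) = x powr (1 + 1 / 2)" by simp
  also have "\<dots> = x * sqrt x"
    using assms False by (subst powr_add) (simp add: powr_half_sqrt)
  finally show ?thesis .
qed simp

lemma eigenvector_entry_deviation:
  fixes n k :: nat and p C x :: real
  assumes n: "0 < n" and p: "0 < p" and q: "1 < p * n" and k: "0 < k"
    and L: "1 \<le> ln n" and lnq: "ln n / k \<le> ln (p * n)"
    and x: "\<bar>x - 1 / sqrt n\<bar> \<le> C * ln n powr (3 / 2) / (sqrt p * n * ln (p * n))"
  shows "\<bar>sqrt n * x - 1\<bar> \<le> \<bar>C\<bar> * k * sqrt (ln n / (p * n))"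
proof -
  have lnq_pos: "0 < ln (p * n)" using q by simp
  have "C * ln n powr (3 / 2) / (sqrt p * n * ln (p * n))
      \<le> \<bar>C\<bar> * ln n powr (3 / 2) / (sqrt p * n * ln (p * n))"
    using p n lnq_pos by (intro divide_right_mono mult_right_mono) auto
  then have x': "\<bar>x - 1 / sqrt n\<bar> \<le> \<bar>C\<bar> * ln n powr (3 / 2) / (sqrt p * n * ln (p * n))"
    by (rule order_trans[OF x])
  have "sqrt n * x - 1 = sqrt n * (x - 1 / sqrt n)"
    using n by (simp add: right_diff_distrib)
  then have "\<bar>sqrt n * x - 1\<bar> = sqrt n * \<bar>x - 1 / sqrt n\<bar>"
    by (simp add: abs_mult)
  also have "\<dots> \<le> sqrt n * (\<bar>C\<bar> * ln n powr (3 / 2) / (sqrt p * n * ln (p * n)))"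
    using x' by (intro mult_left_mono) auto
  also have "\<dots> = \<bar>C\<bar> * (ln n / ln (p * n)) * sqrt (ln n / (p * n))"
  proof -
    have "ln n powr (3 / 2) = ln n * sqrt (ln n)"
      using L by (simp add: powr_three_halves)
    moreover have "sqrt p * n = sqrt (p * n) * sqrt n"
      by (simp add: real_sqrt_mult)
    ultimately show ?thesis
      using n q by (simp add: real_sqrt_divide field_simps)
  qed
  also have "\<dots> \<le> \<bar>C\<bar> * k * sqrt (ln n / (p * n))"
  proof -
    have "ln n / ln (p * n) \<le> k"
      using lnq lnq_pos k by (simp add: divide_le_eq mult.commute)
    then show ?thesis
      using L q by (intro mult_right_mono mult_left_mono) auto
  qed
  finally show ?thesis .
qed

lemma spectral_error_le:
  fixes n k l :: nat and q L M C t :: real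
  assumes q: "1 < q" and nq: "real n \<le> q ^ k" and l: "2 * k + 1 \<le> l" and L: "1 \<le> L"
    and M: "0 \<le> M" "M \<le> C * sqrt q" and t: "0 \<le> t" "2 * t \<le> 1"
  shows "n * M ^ l / (q * (1 - t)) ^ l \<le> 2 ^ l * \<bar>C\<bar> ^ l * sqrt (L / q)"
proof -
  define s where "s = sqrt q"
  have s: "1 < s" "s\<^sup>2 = q" using q by (auto simp: s_def)
  have "n * M ^ l / (q * (1 - t)) ^ l \<le> n * (\<bar>C\<bar> * s) ^ l / (q / 2) ^ l"
  proof (rule frac_le)
    show "n * M ^ l \<le> n * (\<bar>C\<bar> * s) ^ l"
      using M s by (intro mult_left_mono power_mono) (auto simp: s_def intro: order_trans)
    show "(q / 2) ^ l \<le> (q * (1 - t)) ^ l"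
      using q t by (intro power_mono) auto
  qed (use q s in auto)
  also have "\<dots> = 2 ^ l * \<bar>C\<bar> ^ l * (n / s ^ l)"
  proof -
    have "q ^ l = s ^ l * s ^ l"
      by (simp flip: s(2) add: power2_eq_square power_mult_distrib)
    then show ?thesis
      using s by (simp add: power_mult_distrib power_divide field_simps)
  qed
  also have "n / s ^ l \<le> sqrt (L / q)"
  proof -
    have "real n \<le> s ^ (2 * k)" using nq by (simp add: power_mult s(2))
    also have "\<dots> \<le> s ^ (l - 1)" using s l by (intro power_increasing) auto
    finally have "n / s ^ l \<le> s ^ (l - 1) / s ^ l"
      using s by (intro divide_right_mono) auto
    also have "\<dots> = 1 / s"
      using s l by (cases l) auto
    also have "\<dots> \<le> sqrt (L / q)"
      using L s by (simp add: s_def real_sqrt_divide divide_right_mono)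
    finally show ?thesis .
  qed
  finally show ?thesis by (simp add: mult_left_mono)
qed

lemma good_graph_normalized:
  fixes k n :: nat and p C3 C4 C5 C6 eps C8 :: real and E :: "nat \<Rightarrow> nat \<Rightarrow> bool"
  defines "K \<equiv> \<bar>C3\<bar> + real k * \<bar>C6\<bar>"
  defines "t \<equiv> K * sqrt (ln n / (p * n))"
  assumes k: "0 < k" and n: "3 \<le> n"
    and p: "ln n / real n powr ((real k - 1) / real k) \<le> p"
    and small: "(4 * K)\<^sup>2 \<le> real n powr (1 / k)"
    and good: "good_graph k n p C3 C4 C5 C6 eps C8 E"
  shows "0 \<le> t" and "4 * t \<le> 1"
    and "\<forall>v<n. p * n * (1 - t) \<le> deg n E v \<and> deg n E v \<le> p * n * (1 + t)"
    and "\<exists>\<phi>\<in>carrier_vec n. adj_mat n E *\<^sub>v \<phi> = eigs n E ! 0 \<cdot>\<^sub>v \<phi> \<and> \<phi> \<bullet> \<phi> = 1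
      \<and> (\<forall>i<n. \<bar>sqrt n * \<phi> $ i - 1\<bar> \<le> t)"
proof -
  define q where "q = p * n"
  define g where "g = sqrt (ln n / q)"
  have L: "1 \<le> ln n" and q: "1 < q" and lnq: "ln n / k \<le> ln q"
    and Lq: "ln n / q \<le> 1 / real n powr (1 / k)"
    using edge_probability_consequences[OF n k p] unfolding q_def by auto
  have p0: "0 < p" using q n unfolding q_def by (smt (verit) mult_nonpos_nonneg of_nat_0_le_iff)
  have g0: "0 < g" using L q by (simp add: g_def)
  show t0: "0 \<le> t" using g0 by (simp add: t_def K_def g_def q_def)
  have "(4 * t)\<^sup>2 = (4 * K)\<^sup>2 * (ln n / q)"
    using L q by (simp add: t_def q_def power_mult_distrib)
  also have "\<dots> \<le> (4 * K)\<^sup>2 * (1 / real n powr (1 / k))"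
    using Lq by (intro mult_left_mono) auto
  also have "\<dots> \<le> 1\<^sup>2"
    using small n by simp
  finally show "4 * t \<le> 1"
    by (rule power2_le_imp_le) simp
  have "sqrt (p * n * ln n) = sqrt (q\<^sup>2 * (ln n / q))"
    using q by (simp add: q_def power2_eq_square)
  also have "\<dots> = sqrt (q\<^sup>2) * g"
    unfolding g_def by (rule real_sqrt_mult)
  also have "sqrt (q\<^sup>2) = q"
    using q by simp
  finally have "sqrt (p * n * ln n) = q * g" .
  moreover have "C3 * (q * g) \<le> K * (q * g)"
    using q g0 by (intro mult_right_mono) (auto simp: K_def intro: add_increasing2)
  ultimately show "\<forall>v<n. p * n * (1 - t) \<le> deg n E v \<and> deg n E v \<le> p * n * (1 + t)"
    using good by (force simp: good_graph_def t_def g_def q_def abs_le_iff algebra_simps)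
  obtain \<phi> where \<phi>: "\<phi> \<in> carrier_vec n" "adj_mat n E *\<^sub>v \<phi> = eigs n E ! 0 \<cdot>\<^sub>v \<phi>"
      "(\<Sum>i<n. (\<phi> $ i)\<^sup>2) = 1"
    and \<phi>_dev: "\<forall>i<n. \<bar>\<phi> $ i - 1 / sqrt n\<bar> \<le> C6 * ln n powr (3 / 2) / (sqrt p * n * ln (p * n))"
    using good unfolding good_graph_def by auto
  have "\<bar>sqrt n * \<phi> $ i - 1\<bar> \<le> t" if "i < n" for i
  proof -
    have "\<bar>sqrt n * \<phi> $ i - 1\<bar> \<le> \<bar>C6\<bar> * k * g"
      using eigenvector_entry_deviation[OF _ p0 _ k L _ \<phi>_dev[rule_format, OF that]] n q lnq
      unfolding g_def q_def by simp
    also have "\<dots> \<le> t"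
      using g0 by (simp add: t_def K_def g_def q_def mult_right_mono)
    finally show ?thesis .
  qed
  moreover have "\<phi> \<bullet> \<phi> = 1"
    using \<phi>(1,3) by (simp add: scalar_prod_self_eq_sum_sq)
  ultimately show "\<exists>\<phi>\<in>carrier_vec n. adj_mat n E *\<^sub>v \<phi> = eigs n E ! 0 \<cdot>\<^sub>v \<phi> \<and> \<phi> \<bullet> \<phi> = 1
      \<and> (\<forall>i<n. \<bar>sqrt n * \<phi> $ i - 1\<bar> \<le> t)"
    using \<phi> by blast
qed

lemma abs_sub_inverse_le:
  fixes P C p :: real and n :: nat
  assumes n: "0 < n" and p: "0 < p" and P: "\<bar>n * P - 1\<bar> \<le> C * sqrt (ln n / (p * n))"
  shows "\<bar>P - 1 / n\<bar> \<le> C * sqrt (ln n) / (sqrt p * real n powr (3 / 2))"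
proof -
  have "P - 1 / n = (n * P - 1) / n"
    using n by (simp add: field_simps)
  then have "\<bar>P - 1 / n\<bar> = \<bar>n * P - 1\<bar> / n"
    by simp
  also have "\<dots> \<le> C * sqrt (ln n / (p * n)) / n"
    using P n by (intro divide_right_mono) auto
  also have "\<dots> = C * sqrt (ln n) / (sqrt p * real n powr (3 / 2))"
    by (simp add: powr_three_halves real_sqrt_divide real_sqrt_mult mult_ac)
  finally show ?thesis .
qed

lemma walk_prob_error_bound:
  fixes k l n :: nat and p C3 C4 C5 C6 eps C8 :: real and E :: "nat \<Rightarrow> nat \<Rightarrow> bool"
  defines "K \<equiv> \<bar>C3\<bar> + real k * \<bar>C6\<bar>"
  assumes k: "0 < k" and l: "2 * k + 1 \<le> l" and n: "3 \<le> n"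
    and p: "ln n / real n powr ((real k - 1) / real k) \<le> p"
    and small: "(4 * K)\<^sup>2 \<le> real n powr (1 / k)"
    and good: "good_graph k n p C3 C4 C5 C6 eps C8 E" and w: "w < n" and x: "x < n"
  shows "\<bar>walk_prob n E w l x - 1 / n\<bar>
    \<le> (2 ^ (2 * l + 4) * K + 2 ^ l * \<bar>C8\<bar> ^ l) * sqrt (ln n) / (sqrt p * real n powr (3 / 2))"
proof -
  define q where "q = p * n"
  define g where "g = sqrt (ln n / q)"
  define t where "t = K * g"
  have L: "1 \<le> ln n" and q: "1 < q" and nq: "real n \<le> q ^ k"
    using edge_probability_consequences[OF n k p] unfolding q_def by auto
  have p0: "0 < p" using q n unfolding q_def by (smt (verit) mult_nonpos_nonneg of_nat_0_le_iff)
  note normalized = good_graph_normalized[OF k n p small[unfolded K_def] good]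
  have t: "0 \<le> t" "4 * t \<le> 1" and deg: "\<forall>v<n. q * (1 - t) \<le> deg n E v \<and> deg n E v \<le> q * (1 + t)"
    using normalized(1-3) unfolding t_def g_def q_def K_def by simp_all
  obtain \<phi> where \<phi>: "\<phi> \<in> carrier_vec n" "adj_mat n E *\<^sub>v \<phi> = eigs n E ! 0 \<cdot>\<^sub>v \<phi>" "\<phi> \<bullet> \<phi> = 1"
    and \<phi>_entries: "\<forall>i<n. \<bar>sqrt n * \<phi> $ i - 1\<bar> \<le> t"
    using normalized(4) unfolding t_def g_def q_def K_def by blast
  have sg: "simple_graph n E" and gap: "max \<bar>eigs n E ! 1\<bar> \<bar>eigs n E ! (n - 1)\<bar> \<le> C8 * sqrt q"
    using good unfolding good_graph_def q_def by auto
  let ?A = "adj_mat n E" and ?\<mu> = "eigs n E ! 0"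
  define M where "M = max \<bar>eigs n E ! 1\<bar> \<bar>eigs n E ! (n - 1)\<bar>"
  have dlo: "0 < q * (1 - t)" using q t by simp
  interpret walk_estimate n l t q ?\<mu> M "(?A ^\<^sub>m l) $$ (w, x)" "walk_prob n E w l x" "\<phi> $ w" "\<phi> $ x"
    "2 ^ l * \<bar>C8\<bar> ^ l * g"
  proof unfold_locales
    show "(?A ^\<^sub>m l) $$ (w, x) / (q * (1 + t)) ^ l \<le> walk_prob n E w l x"
      using deg dlo by (intro walk_prob_ge_adj_pow[OF _ w x]) (auto intro: less_le_trans)
    show "walk_prob n E w l x \<le> (?A ^\<^sub>m l) $$ (w, x) / (q * (1 - t)) ^ l"
      using deg by (intro walk_prob_le_adj_pow[OF dlo _ w x]) auto
    show "\<bar>(?A ^\<^sub>m l) $$ (w, x) - ?\<mu> ^ l * \<phi> $ w * \<phi> $ x\<bar> \<le> M ^ l"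
      using pow_entry_approx_sorted_eigenvalues[OF adj_mat_carrier adj_mat_symmetric[OF sg] \<phi>(1) _ \<phi>(3) w x]
        \<phi>(2) unfolding M_def eigs_def by simp
    show "q * (1 - t) * (1 - t) \<le> ?\<mu> * (1 + t)" "?\<mu> * (1 - t) \<le> q * (1 + t) * (1 + t)"
      using top_eigenvalue_bounds[OF _ _ _ deg \<phi>(1,2) \<phi>_entries w] q t by auto
    show "n * M ^ l / (q * (1 - t)) ^ l \<le> 2 ^ l * \<bar>C8\<bar> ^ l * g"
      unfolding g_def using gap t by (intro spectral_error_le[OF q nq l L]) (auto simp: M_def)
  qed (use t q n \<phi>_entries w x in auto)
  have "\<bar>n * walk_prob n E w l x - 1\<bar> \<le> (2 ^ (2 * l + 4) * K + 2 ^ l * \<bar>C8\<bar> ^ l) * sqrt (ln n / (p * n))"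
    using relative_error by (simp add: t_def g_def q_def algebra_simps)
  then show ?thesis
    using n p0 by (intro abs_sub_inverse_le) auto
qed

lemma eventually_le_root_sequentially:
  fixes k :: nat and c :: real
  assumes "0 < k"
  shows "eventually (\<lambda>n. c \<le> real n powr (1 / k)) sequentially"
proof -
  have c: "0 < \<bar>c\<bar> + 1" by simp
  have "((\<lambda>n. real n powr - (1 / real k)) \<longlongrightarrow> 0) sequentially"
    using assms by (intro tendsto_neg_powr filterlim_real_sequentially) simp
  then have "eventually (\<lambda>n. real n powr - (1 / real k) < 1 / (\<bar>c\<bar> + 1)) sequentially"
    by (rule order_tendstoD(2)) simp
  moreover have "eventually (\<lambda>n. 0 < n) sequentially"
    by (rule eventually_gt_at_top)
  ultimately show ?thesis
  proof eventually_elim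
    case (elim n)
    then have "1 / real n powr (1 / k) < 1 / (\<bar>c\<bar> + 1)" "0 < real n powr (1 / k)"
      by (simp_all add: powr_minus_divide)
    then have "\<bar>c\<bar> + 1 < real n powr (1 / k)"
      using c by (simp add: inverse_eq_divide[symmetric])
    then show ?case by simp
  qed
qed

text \<open>
  Only the lower bound on p and properties (iii), (vi) and (viii) of the class are used:
  the estimate of \<lambda>1 follows from (iii) and (vi), and l \<ge> 2k + 1 would suffice.
\<close>

theorem corollary3p7:
  fixes k l :: nat and p :: "nat \<Rightarrow> real" and c C3 C4 C5 C6 C8 :: real
    and eps :: "nat \<Rightarrow> real"
  assumes "k \<ge> 2" and "l \<ge> 3 * k + 2"
    and "c > 0"
    and "eventually (\<lambda>n. ln n / real n powr ((real k - 1) / real k) \<le> p n \<and>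
                          p n \<le> 1 - c * (ln n)^4 / n) sequentially"
    and "eps \<longlonglongrightarrow> 0"
  shows "\<exists>C N. \<forall>n \<ge> N. \<forall>E. good_graph k n (p n) C3 C4 C5 C6 (eps n) C8 E \<longrightarrow>
           (\<forall>w<n. \<forall>x<n. \<bar>walk_prob n E w l x - 1 / real n\<bar>
              \<le> C * sqrt (ln n) / (sqrt (p n) * real n powr (3/2)))"
proof -
  define K where "K = \<bar>C3\<bar> + real k * \<bar>C6\<bar>"
  have k: "0 < k" and l: "2 * k + 1 \<le> l" using assms(1,2) by auto
  have "eventually (\<lambda>n. 3 \<le> n \<and> ln n / real n powr ((real k - 1) / real k) \<le> p n
      \<and> (4 * K)\<^sup>2 \<le> real n powr (1 / k)) sequentially"
    using assms(4) eventually_ge_at_top[of 3] eventually_le_root_sequentially[OF k, of "(4 * K)\<^sup>2"]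
    by eventually_elim auto
  then obtain N where N: "\<And>n. N \<le> n \<Longrightarrow> 3 \<le> n \<and> ln n / real n powr ((real k - 1) / real k) \<le> p n
      \<and> (4 * K)\<^sup>2 \<le> real n powr (1 / k)"
    unfolding eventually_sequentially by blast
  show ?thesis
  proof (intro exI[of _ "2 ^ (2 * l + 4) * K + 2 ^ l * \<bar>C8\<bar> ^ l"] exI[of _ N] allI impI)
    fix n E w x
    assume "N \<le> n" and "good_graph k n (p n) C3 C4 C5 C6 (eps n) C8 E" and "w < n" "x < n"
    with N show "\<bar>walk_prob n E w l x - 1 / real n\<bar>
        \<le> (2 ^ (2 * l + 4) * K + 2 ^ l * \<bar>C8\<bar> ^ l) * sqrt (ln n) / (sqrt (p n) * real n powr (3 / 2))"
      unfolding K_def by (intro walk_prob_error_bound[OF k l]) auto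
  qed
qed

end
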